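(* For every integer $n\ge 3$ there exist integers $j$ with $2\le j\le\lceil n/2\rceil$ and $k$ with $0\le k<\lceil\frac{n-2}{3}\rceil$ such that every doubling minimizer $\mu$ on $L_n$ satisfies $$\frac{\mu(B(j,1))}{\mu(B(j,0))}=\frac{\mu(B(1,2k+1))}{\mu(B(1,k))}=C_\mu.$$
   Context: $L_n$ is the path graph with vertices $\{1,\dots,n\}$ and edges $\{j,j+1\}$, with distance $|i-j|$. A measure $\mu$ on $L_n$ is a weight function $\mu:\{1,\dots,n\}\to(0,\infty)$, $\mu(A)=\sum_{v\in A}\mu(v)$. Closed balls: $B(x,r)=\{y:|x-y|\le r\}$. $C_\mu=\sup\{\mu(B(x,2k+1))/\mu(B(x,k)):1\le x\le n,\ k\ge 0\}$, $C_{L_n}=\inf_\mu C_\mu$. A doubling minimizer on $L_n$ is a measure $\mu$ with $C_\mu=C_{L_n}$. *)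

theory Defs
  imports "HOL-Analysis.Analysis"
begin

text \<open>Path graph L_n: vertex set {1..n}, distance |i - j|.
  A measure is a weight function positive on {1..n} (values outside are irrelevant).\<close>

definition is_measure :: "nat \<Rightarrow> (nat \<Rightarrow> real) \<Rightarrow> bool" where
  "is_measure n \<mu> \<longleftrightarrow> (\<forall>v\<in>{1..n}. \<mu> v > 0)"

definition ball_L :: "nat \<Rightarrow> nat \<Rightarrow> nat \<Rightarrow> nat set" where
  "ball_L n x r = {y \<in> {1..n}. \<bar>int x - int y\<bar> \<le> int r}"

definition meas :: "(nat \<Rightarrow> real) \<Rightarrow> nat set \<Rightarrow> real" where
  "meas \<mu> A = (\<Sum>v\<in>A. \<mu> v)"

definition doubling_const :: "nat \<Rightarrow> (nat \<Rightarrow> real) \<Rightarrow> real" where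
  "doubling_const n \<mu> =
     Sup {meas \<mu> (ball_L n x (2*k+1)) / meas \<mu> (ball_L n x k) | x k. x \<in> {1..n}}"

definition doubling_const_graph :: "nat \<Rightarrow> real" where
  "doubling_const_graph n = Inf {doubling_const n \<mu> | \<mu>. is_measure n \<mu>}"

definition doubling_minimizer :: "nat \<Rightarrow> (nat \<Rightarrow> real) \<Rightarrow> bool" where
  "doubling_minimizer n \<mu> \<longleftrightarrow> is_measure n \<mu> \<and> doubling_const n \<mu> = doubling_const_graph n"

end

theory Submission
  imports Defs
begin

text \<open>
  Call a ball tight for a minimizer if its doubling ratio equals C = C_{L_n}, and slack otherwise.
  Sums of minimizers and mirror images v \<mapsto> n + 1 - v of minimizers are again minimizers, and a
  ball slack for one summand stays slack for the sum. So if no ball of a finite family were tight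
  for every minimizer, a single mirror-symmetric minimizer \<sigma> would be slack on the whole family;
  if moreover some measure w is slack at all remaining balls, then \<sigma> + t w is slack everywhere for
  small t > 0, contradicting minimality.

  Testing the doubling inequality at radius 0 against sin(j\<pi>/(n + 1)), the Perron eigenvector of
  \<mu> \<mapsto> \<mu>(B(\<cdot>, 1)), gives C \<ge> T = 1 + 2 cos(\<pi>/(n + 1)) > 7/3. For the unit balls B(j, 1) with
  2 \<le> j \<le> (n + 1)/2 take for w the counting measure, whose other doubling ratios are at most 7/3.
  For the balls B(1, k) with 3k + 3 \<le> n: if C = T, equality in the Perron argument makes every
  unit ball tight, in particular B(1, 1). If C > T, take for w the sine measure: its doubling
  ratios are at most T except at the balls B(x, k) with inner ball [1, m], 3m \<le> n, and their
  mirror images, and \<sigma> is slack there since B(x, k) = B(1, m - 1) and B(x, 2k + 1) \<subseteq> B(1, 2m - 1).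
\<close>

section \<open>Balls and measures on the path\<close>

lemma ball_L_eq_interval: "ball_L n x r = {max 1 (x - r) .. min n (x + r)}"
  unfolding ball_L_def by auto

lemma ball_L_subset: "ball_L n x r \<subseteq> {1..n}"
  unfolding ball_L_def by auto

lemma finite_ball_L [simp]: "finite (ball_L n x r)"
  using finite_subset[OF ball_L_subset finite_atLeastAtMost] .

lemma center_in_ball_L: "x \<in> {1..n} \<Longrightarrow> x \<in> ball_L n x r"
  unfolding ball_L_def by auto

lemma ball_L_eq_all: "x \<in> {1..n} \<Longrightarrow> n \<le> r \<Longrightarrow> ball_L n x r = {1..n}"
  unfolding ball_L_eq_interval by auto

lemma mem_ball_L_commute:
  "x \<in> {1..n} \<Longrightarrow> y \<in> {1..n} \<Longrightarrow> y \<in> ball_L n x r \<longleftrightarrow> x \<in> ball_L n y r"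
  unfolding ball_L_def by auto

lemma meas_add: "meas (\<lambda>v. \<mu> v + \<nu> v) A = meas \<mu> A + meas \<nu> A"
  unfolding meas_def by (simp add: sum.distrib)

lemma meas_scale: "meas (\<lambda>v. t * \<mu> v) A = t * meas \<mu> A"
  unfolding meas_def by (simp add: sum_distrib_left)

lemma meas_nonneg: "is_measure n \<mu> \<Longrightarrow> A \<subseteq> {1..n} \<Longrightarrow> 0 \<le> meas \<mu> A"
  unfolding meas_def is_measure_def by (force intro: sum_nonneg less_imp_le)

lemma meas_mono:
  assumes "is_measure n \<mu>" "A \<subseteq> B" "B \<subseteq> {1..n}"
  shows "meas \<mu> A \<le> meas \<mu> B"
  unfolding meas_def
  using assms finite_subset[OF assms(3)] unfolding is_measure_def
  by (intro sum_mono2) (auto intro: less_imp_le)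

lemma meas_ball_L_pos:
  assumes "is_measure n \<mu>" "x \<in> {1..n}"
  shows "0 < meas \<mu> (ball_L n x r)"
proof -
  have "\<forall>v\<in>ball_L n x r. 0 < \<mu> v"
    using assms(1) ball_L_subset unfolding is_measure_def by blast
  then show ?thesis
    unfolding meas_def using center_in_ball_L[OF assms(2)] by (intro sum_pos) auto
qed

lemma meas_ball_L_0: "x \<in> {1..n} \<Longrightarrow> meas \<mu> (ball_L n x 0) = \<mu> x"
proof -
  assume "x \<in> {1..n}"
  then have "ball_L n x 0 = {x}" unfolding ball_L_eq_interval by auto
  then show ?thesis unfolding meas_def by simp
qed

lemma meas_ball_L_eq_sum:
  "meas \<mu> (ball_L n x r) = (\<Sum>y\<in>{1..n}. if y \<in> ball_L n x r then \<mu> y else 0)"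
proof -
  have "ball_L n x r = {1..n} \<inter> ball_L n x r" using ball_L_subset by blast
  then show ?thesis unfolding meas_def by (metis finite_atLeastAtMost sum.inter_restrict)
qed

lemma sum_meas_ball_L_swap:
  "(\<Sum>x\<in>{1..n}. f x * meas g (ball_L n x r)) = (\<Sum>y\<in>{1..n}. g y * meas f (ball_L n y r))"
proof -
  have "(\<Sum>x\<in>{1..n}. f x * meas g (ball_L n x r))
      = (\<Sum>x\<in>{1..n}. \<Sum>y\<in>{1..n}. if y \<in> ball_L n x r then f x * g y else 0)"
    unfolding meas_ball_L_eq_sum sum_distrib_left by (simp add: if_distrib cong: if_cong)
  also have "\<dots> = (\<Sum>y\<in>{1..n}. \<Sum>x\<in>{1..n}. if x \<in> ball_L n y r then g y * f x else 0)"
    by (subst sum.swap) (intro sum.cong refl, auto simp: mem_ball_L_commute mult.commute)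
  also have "\<dots> = (\<Sum>y\<in>{1..n}. g y * meas f (ball_L n y r))"
    unfolding meas_ball_L_eq_sum sum_distrib_left by (auto intro!: sum.cong)
  finally show ?thesis .
qed

definition reflect_measure :: "nat \<Rightarrow> (nat \<Rightarrow> real) \<Rightarrow> nat \<Rightarrow> real" where
  "reflect_measure n \<mu> v = \<mu> (n + 1 - v)"

definition mirror_symmetric :: "nat \<Rightarrow> (nat \<Rightarrow> real) \<Rightarrow> bool" where
  "mirror_symmetric n \<mu> \<longleftrightarrow> (\<forall>v\<in>{1..n}. \<mu> (n + 1 - v) = \<mu> v)"

lemma meas_reflect_measure_ball_L:
  assumes "x \<in> {1..n}"
  shows "meas (reflect_measure n \<mu>) (ball_L n x r) = meas \<mu> (ball_L n (n + 1 - x) r)"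
  unfolding meas_def reflect_measure_def
  by (rule sum.reindex_bij_witness[where i="\<lambda>v. n + 1 - v" and j="\<lambda>v. n + 1 - v"])
     (use assms in \<open>auto simp: ball_L_eq_interval\<close>)

lemma meas_ball_L_mirror:
  assumes "mirror_symmetric n \<mu>" "x \<in> {1..n}"
  shows "meas \<mu> (ball_L n (n + 1 - x) r) = meas \<mu> (ball_L n x r)"
proof -
  have "meas (reflect_measure n \<mu>) (ball_L n x r) = meas \<mu> (ball_L n x r)"
    unfolding meas_def reflect_measure_def
    using assms(1) ball_L_subset[of n x r] unfolding mirror_symmetric_def by (intro sum.cong) auto
  then show ?thesis using meas_reflect_measure_ball_L[OF assms(2)] by simp
qed

section \<open>The doubling constant and its minimizers\<close>

definition doubling_ratio :: "nat \<Rightarrow> (nat \<Rightarrow> real) \<Rightarrow> nat \<Rightarrow> nat \<Rightarrow> real" where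
  "doubling_ratio n \<mu> x k = meas \<mu> (ball_L n x (2*k+1)) / meas \<mu> (ball_L n x k)"

definition doubling_bounded :: "nat \<Rightarrow> real \<Rightarrow> (nat \<Rightarrow> real) \<Rightarrow> bool" where
  "doubling_bounded n c \<mu> \<longleftrightarrow>
     (\<forall>x\<in>{1..n}. \<forall>k. meas \<mu> (ball_L n x (2*k+1)) \<le> c * meas \<mu> (ball_L n x k))"

definition slack_at :: "nat \<Rightarrow> real \<Rightarrow> (nat \<Rightarrow> real) \<Rightarrow> nat \<Rightarrow> nat \<Rightarrow> bool" where
  "slack_at n c \<mu> x k \<longleftrightarrow> meas \<mu> (ball_L n x (2*k+1)) < c * meas \<mu> (ball_L n x k)"

definition minimizers_attain :: "nat \<Rightarrow> nat \<Rightarrow> nat \<Rightarrow> bool" where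
  "minimizers_attain n x k \<longleftrightarrow> (\<forall>\<mu>. doubling_minimizer n \<mu> \<longrightarrow>
     meas \<mu> (ball_L n x (2*k+1)) = doubling_const_graph n * meas \<mu> (ball_L n x k))"

lemma doubling_ratio_truncate:
  "x \<in> {1..n} \<Longrightarrow> doubling_ratio n \<mu> x k = doubling_ratio n \<mu> x (min k n)"
  unfolding doubling_ratio_def by (cases "k \<le> n") (simp_all add: ball_L_eq_all)

lemma doubling_const_eq_Sup_image:
  "doubling_const n \<mu> = Sup ((\<lambda>(x, k). doubling_ratio n \<mu> x k) ` ({1..n} \<times> {..n}))"
proof -
  have "{meas \<mu> (ball_L n x (2*k+1)) / meas \<mu> (ball_L n x k) | x k. x \<in> {1..n}}
      = (\<lambda>(x, k). doubling_ratio n \<mu> x k) ` ({1..n} \<times> {..n})"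
  proof (intro set_eqI iffI)
    fix r assume "r \<in> {meas \<mu> (ball_L n x (2*k+1)) / meas \<mu> (ball_L n x k) | x k. x \<in> {1..n}}"
    then obtain x k where "x \<in> {1..n}" "r = doubling_ratio n \<mu> x (min k n)"
      unfolding doubling_ratio_def[symmetric] using doubling_ratio_truncate by blast
    then show "r \<in> (\<lambda>(x, k). doubling_ratio n \<mu> x k) ` ({1..n} \<times> {..n})" by force
  qed (auto simp: doubling_ratio_def)
  then show ?thesis unfolding doubling_const_def by simp
qed

lemma doubling_ratio_le_doubling_const:
  assumes "x \<in> {1..n}"
  shows "doubling_ratio n \<mu> x k \<le> doubling_const n \<mu>"
proof -
  have "doubling_ratio n \<mu> x (min k n) \<in> (\<lambda>(x, k). doubling_ratio n \<mu> x k) ` ({1..n} \<times> {..n})"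
    using assms by (intro image_eqI[where x="(x, min k n)"]) auto
  then show ?thesis
    unfolding doubling_const_eq_Sup_image doubling_ratio_truncate[OF assms, of \<mu> k]
    by (intro cSup_upper bdd_above_finite) auto
qed

lemma doubling_const_attained:
  assumes "1 \<le> n"
  shows "\<exists>x\<in>{1..n}. \<exists>k\<le>n. doubling_const n \<mu> = doubling_ratio n \<mu> x k"
proof -
  let ?R = "(\<lambda>(x, k). doubling_ratio n \<mu> x k) ` ({1..n} \<times> {..n})"
  have "finite ?R" "?R \<noteq> {}" using assms by auto
  then have "Sup ?R \<in> ?R" using cSup_eq_Max Max_in by metis
  then show ?thesis unfolding doubling_const_eq_Sup_image by auto
qed

lemma doubling_ratio_le_iff:
  "is_measure n \<mu> \<Longrightarrow> x \<in> {1..n} \<Longrightarrow>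
     doubling_ratio n \<mu> x k \<le> c \<longleftrightarrow> meas \<mu> (ball_L n x (2*k+1)) \<le> c * meas \<mu> (ball_L n x k)"
  unfolding doubling_ratio_def by (simp add: pos_divide_le_eq meas_ball_L_pos)

lemma doubling_ratio_less_iff:
  "is_measure n \<mu> \<Longrightarrow> x \<in> {1..n} \<Longrightarrow> doubling_ratio n \<mu> x k < c \<longleftrightarrow> slack_at n c \<mu> x k"
  unfolding doubling_ratio_def slack_at_def by (simp add: pos_divide_less_eq meas_ball_L_pos)

lemma doubling_const_le_iff:
  assumes "1 \<le> n" "is_measure n \<mu>"
  shows "doubling_const n \<mu> \<le> c \<longleftrightarrow> doubling_bounded n c \<mu>"
proof
  assume le: "doubling_const n \<mu> \<le> c"
  show "doubling_bounded n c \<mu>"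
    unfolding doubling_bounded_def
  proof (intro ballI allI)
    fix x k assume x: "x \<in> {1..n}"
    have "doubling_ratio n \<mu> x k \<le> c"
      using doubling_ratio_le_doubling_const[OF x, of \<mu> k] le by linarith
    then show "meas \<mu> (ball_L n x (2*k+1)) \<le> c * meas \<mu> (ball_L n x k)"
      using doubling_ratio_le_iff[OF assms(2) x] by blast
  qed
next
  assume bounded: "doubling_bounded n c \<mu>"
  obtain x k where x: "x \<in> {1..n}" and eq: "doubling_const n \<mu> = doubling_ratio n \<mu> x k"
    using doubling_const_attained[OF assms(1)] by blast
  show "doubling_const n \<mu> \<le> c"
    unfolding eq doubling_ratio_le_iff[OF assms(2) x] using bounded x doubling_bounded_def by blast
qed

lemma doubling_const_less_if_slack:
  assumes "1 \<le> n" "is_measure n \<mu>" "\<forall>x\<in>{1..n}. \<forall>k\<le>n. slack_at n c \<mu> x k"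
  shows "doubling_const n \<mu> < c"
proof -
  obtain x k where "x \<in> {1..n}" "k \<le> n" "doubling_const n \<mu> = doubling_ratio n \<mu> x k"
    using doubling_const_attained[OF assms(1)] by blast
  then show ?thesis using doubling_ratio_less_iff[OF assms(2)] assms(3) by simp
qed

lemma doubling_const_nonneg:
  assumes "1 \<le> n" "is_measure n \<mu>"
  shows "0 \<le> doubling_const n \<mu>"
proof -
  have "0 \<le> doubling_ratio n \<mu> 1 0"
    unfolding doubling_ratio_def
    by (intro divide_nonneg_nonneg meas_nonneg[OF assms(2) ball_L_subset])
  then show ?thesis using doubling_ratio_le_doubling_const[of 1 n \<mu> 0] assms(1) by simp
qed

lemma doubling_const_graph_le:
  assumes "1 \<le> n" "is_measure n \<mu>"
  shows "doubling_const_graph n \<le> doubling_const n \<mu>"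
  unfolding doubling_const_graph_def
proof (rule cInf_lower)
  show "bdd_below {doubling_const n \<mu> |\<mu>. is_measure n \<mu>}"
    using doubling_const_nonneg[OF assms(1)] by (auto intro: bdd_belowI[where m=0])
qed (use assms in blast)

lemma le_doubling_const_graph:
  assumes "\<And>\<mu>. is_measure n \<mu> \<Longrightarrow> c \<le> doubling_const n \<mu>"
  shows "c \<le> doubling_const_graph n"
  unfolding doubling_const_graph_def
proof (rule cInf_greatest)
  have "is_measure n (\<lambda>_. 1)" by (simp add: is_measure_def)
  then show "{doubling_const n \<mu> |\<mu>. is_measure n \<mu>} \<noteq> {}" by blast
qed (use assms in auto)

lemma doubling_minimizer_iff:
  assumes "1 \<le> n"
  shows "doubling_minimizer n \<mu> \<longleftrightarrow>
    is_measure n \<mu> \<and> doubling_bounded n (doubling_const_graph n) \<mu>"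
proof (cases "is_measure n \<mu>")
  case True
  then have "doubling_const n \<mu> = doubling_const_graph n
      \<longleftrightarrow> doubling_const n \<mu> \<le> doubling_const_graph n"
    using doubling_const_graph_le[OF assms] by fastforce
  then show ?thesis
    unfolding doubling_minimizer_def using doubling_const_le_iff[OF assms True] by blast
qed (simp add: doubling_minimizer_def)

lemma minimizer_slack_at_iff:
  assumes "doubling_minimizer n \<mu>" "x \<in> {1..n}"
  shows "slack_at n (doubling_const_graph n) \<mu> x k \<longleftrightarrow>
    meas \<mu> (ball_L n x (2*k+1)) \<noteq> doubling_const_graph n * meas \<mu> (ball_L n x k)"
proof -
  have "doubling_bounded n (doubling_const_graph n) \<mu>"
    using assms doubling_minimizer_iff[of n \<mu>] by auto
  then have "meas \<mu> (ball_L n x (2*k+1)) \<le> doubling_const_graph n * meas \<mu> (ball_L n x k)"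
    using assms(2) unfolding doubling_bounded_def by blast
  then show ?thesis unfolding slack_at_def by auto
qed

lemma minimizers_attain_imp_ratio_eq:
  assumes "minimizers_attain n x k" "doubling_minimizer n \<mu>" "x \<in> {1..n}"
  shows "meas \<mu> (ball_L n x (2*k+1)) / meas \<mu> (ball_L n x k) = doubling_const n \<mu>"
proof -
  have "0 < meas \<mu> (ball_L n x k)"
    using assms(2,3) meas_ball_L_pos unfolding doubling_minimizer_def by blast
  then show ?thesis
    using assms(1,2) unfolding minimizers_attain_def doubling_minimizer_def by simp
qed

section \<open>Combining and perturbing minimizers\<close>

lemma slack_at_mirror:
  "mirror_symmetric n \<mu> \<Longrightarrow> x \<in> {1..n} \<Longrightarrow>
     slack_at n c \<mu> (n + 1 - x) k \<longleftrightarrow> slack_at n c \<mu> x k"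
  unfolding slack_at_def by (simp only: meas_ball_L_mirror)

lemma doubling_minimizer_reflect_measure:
  assumes "1 \<le> n" "doubling_minimizer n \<mu>"
  shows "doubling_minimizer n (reflect_measure n \<mu>)"
proof -
  have "n + 1 - v \<in> {1..n}" if "v \<in> {1..n}" for v using that by auto
  then have "is_measure n (reflect_measure n \<mu>)"
    using assms(2) unfolding doubling_minimizer_def is_measure_def reflect_measure_def by blast
  moreover have "doubling_bounded n (doubling_const_graph n) (reflect_measure n \<mu>)"
    unfolding doubling_bounded_def
  proof (intro ballI allI)
    fix x k assume x: "x \<in> {1..n}"
    then have "n + 1 - x \<in> {1..n}" by auto
    then show "meas (reflect_measure n \<mu>) (ball_L n x (2*k+1))
        \<le> doubling_const_graph n * meas (reflect_measure n \<mu>) (ball_L n x k)"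
      using assms(2)
      unfolding meas_reflect_measure_ball_L[OF x] doubling_minimizer_iff[OF assms(1)]
        doubling_bounded_def by blast
  qed
  ultimately show ?thesis unfolding doubling_minimizer_iff[OF assms(1)] by blast
qed

lemma doubling_minimizer_add:
  assumes "1 \<le> n" "doubling_minimizer n \<mu>" "doubling_minimizer n \<nu>"
  shows "doubling_minimizer n (\<lambda>v. \<mu> v + \<nu> v)"
  using assms(2,3)
  unfolding doubling_minimizer_iff[OF assms(1)] doubling_bounded_def is_measure_def
  by (simp add: meas_add distrib_left add_mono add_pos_pos)

lemma slack_at_add:
  assumes "doubling_bounded n c \<mu>" "doubling_bounded n c \<nu>" "x \<in> {1..n}"
    and "slack_at n c \<mu> x k \<or> slack_at n c \<nu> x k"
  shows "slack_at n c (\<lambda>v. \<mu> v + \<nu> v) x k"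
  using assms unfolding doubling_bounded_def slack_at_def meas_add
  by (smt (verit, best) distrib_left)

lemma slack_at_perturb:
  assumes "doubling_bounded n c \<sigma>" "x \<in> {1..n}" "slack_at n c w x k" "0 < t"
  shows "slack_at n c (\<lambda>v. \<sigma> v + t * w v) x k"
proof -
  have "meas \<sigma> (ball_L n x (2*k+1)) \<le> c * meas \<sigma> (ball_L n x k)"
    using assms(1,2) unfolding doubling_bounded_def by blast
  moreover have "t * meas w (ball_L n x (2*k+1)) < t * (c * meas w (ball_L n x k))"
    using assms(3,4) unfolding slack_at_def by simp
  ultimately show ?thesis
    unfolding slack_at_def meas_add meas_scale by (simp add: algebra_simps)
qed

lemma eventually_slack_at_perturb:
  assumes "slack_at n c \<sigma> x k"
  shows "\<forall>\<^sub>F t in at_right 0. slack_at n c (\<lambda>v. \<sigma> v + t * w v) x k"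
proof -
  let ?gap = "\<lambda>t. c * meas (\<lambda>v. \<sigma> v + t * w v) (ball_L n x k)
                    - meas (\<lambda>v. \<sigma> v + t * w v) (ball_L n x (2*k+1))"
  have "(?gap \<longlongrightarrow> ?gap 0) (at_right 0)"
    unfolding meas_add meas_scale by (intro tendsto_intros)
  moreover have "0 < ?gap 0" using assms unfolding slack_at_def meas_add meas_scale by simp
  ultimately have "\<forall>\<^sub>F t in at_right 0. 0 < ?gap t" by (rule order_tendstoD)
  then show ?thesis unfolding slack_at_def by simp
qed

lemma slack_cover_impossible:
  fixes n :: nat and \<sigma> w :: "nat \<Rightarrow> real"
  defines "C \<equiv> doubling_const_graph n"
  assumes "1 \<le> n" "doubling_minimizer n \<sigma>" "is_measure n w"
    and cover: "\<And>x k. x \<in> {1..n} \<Longrightarrow> k \<le> n \<Longrightarrow> slack_at n C \<sigma> x k \<or> slack_at n C w x k"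
  shows False
proof -
  define G where "G = {(x, k) \<in> {1..n} \<times> {..n}. slack_at n C \<sigma> x k}"
  have "finite G" unfolding G_def by (rule finite_subset[of _ "{1..n} \<times> {..n}"]) auto
  then have "\<forall>\<^sub>F t in at_right 0.
      0 < t \<and> (\<forall>(x, k)\<in>G. slack_at n C (\<lambda>v. \<sigma> v + t * w v) x k)"
    unfolding G_def
    by (intro eventually_conj eventually_at_right_less eventually_ball_finite)
       (auto intro: eventually_slack_at_perturb)
  then obtain t where t: "0 < t" "\<forall>(x, k)\<in>G. slack_at n C (\<lambda>v. \<sigma> v + t * w v) x k"
    using eventually_happens trivial_limit_at_right_real by blast
  have \<sigma>: "is_measure n \<sigma>" "doubling_bounded n C \<sigma>"
    using assms(3) unfolding C_def doubling_minimizer_iff[OF assms(2)] by auto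
  have measure: "is_measure n (\<lambda>v. \<sigma> v + t * w v)"
    using \<sigma>(1) assms(4) t(1) unfolding is_measure_def by (simp add: add_pos_pos)
  have "\<forall>x\<in>{1..n}. \<forall>k\<le>n. slack_at n C (\<lambda>v. \<sigma> v + t * w v) x k"
    using t cover slack_at_perturb[OF \<sigma>(2)] unfolding G_def by blast
  then have "doubling_const n (\<lambda>v. \<sigma> v + t * w v) < C"
    by (rule doubling_const_less_if_slack[OF assms(2) measure])
  then show False
    using doubling_const_graph_le[OF assms(2) measure] unfolding C_def by simp
qed

lemma exists_minimizer_slack_on:
  fixes n :: nat
  defines "C \<equiv> doubling_const_graph n"
  assumes "1 \<le> n" "finite F" "F \<noteq> {}" "F \<subseteq> {1..n} \<times> UNIV"
    and "\<And>x k. (x, k) \<in> F \<Longrightarrow> \<exists>\<mu>. doubling_minimizer n \<mu> \<and> slack_at n C \<mu> x k"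
  shows "\<exists>\<sigma>. doubling_minimizer n \<sigma> \<and> (\<forall>(x, k)\<in>F. slack_at n C \<sigma> x k)"
  using assms(3-6)
proof (induction F rule: finite_ne_induct)
  case (singleton c)
  then show ?case by (cases c) auto
next
  case (insert c F)
  obtain \<sigma> where \<sigma>: "doubling_minimizer n \<sigma>" "\<forall>(x, k)\<in>F. slack_at n C \<sigma> x k"
    using insert by auto
  obtain \<mu> where \<mu>: "doubling_minimizer n \<mu>" "slack_at n C \<mu> (fst c) (snd c)"
    using insert.prems(2)[of "fst c" "snd c"] by auto
  have bounded: "doubling_bounded n C \<sigma>" "doubling_bounded n C \<mu>"
    using \<sigma>(1) \<mu>(1) unfolding C_def doubling_minimizer_iff[OF assms(2)] by auto
  have "\<forall>(x, k)\<in>insert c F. slack_at n C (\<lambda>v. \<sigma> v + \<mu> v) x k"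
    using \<sigma>(2) \<mu>(2) insert.prems(1) by (auto intro!: slack_at_add[OF bounded])
  then show ?case using doubling_minimizer_add[OF assms(2) \<sigma>(1) \<mu>(1)] by blast
qed

lemma exists_mirror_symmetric_minimizer_slack_on:
  fixes n :: nat
  defines "C \<equiv> doubling_const_graph n"
  assumes "1 \<le> n" "finite F" "F \<noteq> {}" "F \<subseteq> {1..n} \<times> UNIV"
    and "\<And>x k. (x, k) \<in> F \<Longrightarrow> \<not> minimizers_attain n x k"
  shows "\<exists>\<sigma>. doubling_minimizer n \<sigma> \<and> mirror_symmetric n \<sigma> \<and> (\<forall>(x, k)\<in>F. slack_at n C \<sigma> x k)"
proof -
  have "\<exists>\<mu>. doubling_minimizer n \<mu> \<and> slack_at n C \<mu> x k" if "(x, k) \<in> F" for x k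
    using assms(6)[OF that] that assms(5) minimizer_slack_at_iff
    unfolding minimizers_attain_def C_def by blast
  then obtain \<sigma> where \<sigma>: "doubling_minimizer n \<sigma>" "\<forall>(x, k)\<in>F. slack_at n C \<sigma> x k"
    using exists_minimizer_slack_on[OF assms(2-5)] unfolding C_def by blast
  let ?\<sigma>' = "reflect_measure n \<sigma>"
  have reflected: "doubling_minimizer n ?\<sigma>'"
    by (rule doubling_minimizer_reflect_measure[OF assms(2) \<sigma>(1)])
  have bounded: "doubling_bounded n C \<sigma>" "doubling_bounded n C ?\<sigma>'"
    using \<sigma>(1) reflected unfolding C_def doubling_minimizer_iff[OF assms(2)] by auto
  have "mirror_symmetric n (\<lambda>v. \<sigma> v + ?\<sigma>' v)"
    unfolding mirror_symmetric_def reflect_measure_def by auto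
  moreover have "\<forall>(x, k)\<in>F. slack_at n C (\<lambda>v. \<sigma> v + ?\<sigma>' v) x k"
    using \<sigma>(2) assms(5) by (auto intro!: slack_at_add[OF bounded])
  ultimately show ?thesis using doubling_minimizer_add[OF assms(2) \<sigma>(1) reflected] by blast
qed

section \<open>The Perron lower bound\<close>

definition path_angle :: "nat \<Rightarrow> real" where
  "path_angle n = pi / real (n + 1)"

definition sine_measure :: "nat \<Rightarrow> nat \<Rightarrow> real" where
  "sine_measure n j = sin (real j * path_angle n)"

definition perron_root :: "nat \<Rightarrow> real" where
  "perron_root n = 1 + 2 * cos (path_angle n)"

lemma path_angle_pos: "0 < path_angle n"
  unfolding path_angle_def by simp

lemma path_angle_mult: "real (n + 1) * path_angle n = pi"
  unfolding path_angle_def by simp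

lemma sine_measure_0 [simp]: "sine_measure n 0 = 0"
  unfolding sine_measure_def by simp

lemma sine_measure_Suc [simp]: "sine_measure n (Suc n) = 0"
  using path_angle_mult[of n] unfolding sine_measure_def by simp

lemma sine_measure_pos:
  assumes "j \<in> {1..n}"
  shows "0 < sine_measure n j"
proof -
  have "real j * path_angle n < real (n + 1) * path_angle n"
    using assms path_angle_pos[of n] by (intro mult_strict_right_mono) auto
  then show ?thesis
    unfolding sine_measure_def path_angle_mult using assms path_angle_pos[of n]
    by (intro sin_gt_zero) auto
qed

lemma sine_measure_nonneg: "j \<le> n + 1 \<Longrightarrow> 0 \<le> sine_measure n j"
  using sine_measure_pos[of j n] by (cases "j = 0 \<or> j = n + 1") auto

lemma sine_measure_reflect: "j \<le> Suc n \<Longrightarrow> sine_measure n (Suc n - j) = sine_measure n j"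
proof -
  assume "j \<le> Suc n"
  then have "real (Suc n - j) * path_angle n = pi - real j * path_angle n"
    using path_angle_mult[of n] by (simp add: of_nat_diff algebra_simps)
  then show ?thesis unfolding sine_measure_def by simp
qed

lemma is_measure_sine_measure: "is_measure n (sine_measure n)"
  unfolding is_measure_def using sine_measure_pos by blast

lemma mirror_symmetric_sine_measure: "mirror_symmetric n (sine_measure n)"
  unfolding mirror_symmetric_def using sine_measure_reflect by auto

lemma sine_measure_neighbours:
  assumes "1 \<le> j"
  shows "sine_measure n (j - 1) + sine_measure n (j + 1)
    = 2 * cos (path_angle n) * sine_measure n j"
proof -
  have "real (j - 1) * path_angle n = real j * path_angle n - path_angle n"
    "real (j + 1) * path_angle n = real j * path_angle n + path_angle n"
    using assms by (simp_all add: of_nat_diff algebra_simps)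
  then show ?thesis unfolding sine_measure_def by (simp add: sin_add sin_diff)
qed

lemma meas_sine_measure_ball_1:
  assumes "j \<in> {1..n}"
  shows "meas (sine_measure n) (ball_L n j 1) = perron_root n * sine_measure n j"
proof -
  have "ball_L n j 1 \<subseteq> {j - 1, j, j + 1}" unfolding ball_L_eq_interval by auto
  moreover have "v = 0 \<or> v = Suc n" if "v \<in> {j - 1, j, j + 1} - ball_L n j 1" for v
    using assms that unfolding ball_L_eq_interval by auto
  then have "\<forall>v\<in>{j - 1, j, j + 1} - ball_L n j 1. sine_measure n v = 0" by fastforce
  ultimately have "meas (sine_measure n) (ball_L n j 1) = sum (sine_measure n) {j - 1, j, j + 1}"
    unfolding meas_def by (intro sum.mono_neutral_left) auto
  also have "\<dots> = sine_measure n (j - 1) + sine_measure n (j + 1) + sine_measure n j"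
  proof -
    have "j - 1 \<notin> {j, j + 1}" using assms by auto
    then show ?thesis by (simp add: algebra_simps)
  qed
  finally show ?thesis
    using sine_measure_neighbours[of j n] assms unfolding perron_root_def
    by (simp add: algebra_simps)
qed

lemma sine_weighted_sum_ball_1:
  "(\<Sum>j\<in>{1..n}. sine_measure n j * meas \<mu> (ball_L n j 1))
     = perron_root n * (\<Sum>j\<in>{1..n}. sine_measure n j * \<mu> j)"
proof -
  have "(\<Sum>j\<in>{1..n}. sine_measure n j * meas \<mu> (ball_L n j 1))
      = (\<Sum>j\<in>{1..n}. \<mu> j * meas (sine_measure n) (ball_L n j 1))"
    by (rule sum_meas_ball_L_swap)
  also have "\<dots> = perron_root n * (\<Sum>j\<in>{1..n}. sine_measure n j * \<mu> j)"
    unfolding sum_distrib_left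
  proof (intro sum.cong refl)
    fix j assume "j \<in> {1..n}"
    then show "\<mu> j * meas (sine_measure n) (ball_L n j 1)
        = perron_root n * (sine_measure n j * \<mu> j)"
      using meas_sine_measure_ball_1[of j n] by simp
  qed
  finally show ?thesis .
qed

lemma doubling_bounded_ball_1:
  "doubling_bounded n c \<mu> \<Longrightarrow> j \<in> {1..n} \<Longrightarrow> meas \<mu> (ball_L n j 1) \<le> c * \<mu> j"
  unfolding doubling_bounded_def by (metis meas_ball_L_0 mult_0_right add_0)

lemma perron_root_le:
  assumes "1 \<le> n" "is_measure n \<mu>" "doubling_bounded n c \<mu>"
  shows "perron_root n \<le> c"
proof -
  let ?W = "\<Sum>j\<in>{1..n}. sine_measure n j * \<mu> j"
  have "0 < ?W"
    using assms(1,2) unfolding is_measure_def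
    by (intro sum_pos) (auto intro!: mult_pos_pos sine_measure_pos)
  moreover have "(\<Sum>j\<in>{1..n}. sine_measure n j * meas \<mu> (ball_L n j 1))
      \<le> (\<Sum>j\<in>{1..n}. sine_measure n j * (c * \<mu> j))"
    using doubling_bounded_ball_1[OF assms(3)]
    by (intro sum_mono mult_left_mono) (auto intro: sine_measure_nonneg)
  then have "perron_root n * ?W \<le> c * ?W"
    unfolding sine_weighted_sum_ball_1 by (simp add: sum_distrib_left algebra_simps)
  ultimately show ?thesis by simp
qed

lemma perron_root_le_doubling_const_graph:
  assumes "1 \<le> n"
  shows "perron_root n \<le> doubling_const_graph n"
proof (rule le_doubling_const_graph)
  fix \<mu> assume "is_measure n \<mu>"
  then show "perron_root n \<le> doubling_const n \<mu>"
    using perron_root_le[OF assms] doubling_const_le_iff[OF assms] by blast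
qed

lemma perron_bounded_attains_ball_1:
  assumes "is_measure n \<mu>" "doubling_bounded n (perron_root n) \<mu>" "j \<in> {1..n}"
  shows "meas \<mu> (ball_L n j 1) = perron_root n * \<mu> j"
proof -
  let ?gap = "\<lambda>i. sine_measure n i * (perron_root n * \<mu> i - meas \<mu> (ball_L n i 1))"
  have "(\<Sum>i\<in>{1..n}. ?gap i) = perron_root n * (\<Sum>i\<in>{1..n}. sine_measure n i * \<mu> i)
      - (\<Sum>i\<in>{1..n}. sine_measure n i * meas \<mu> (ball_L n i 1))"
    by (simp add: right_diff_distrib sum_subtractf sum_distrib_left mult.left_commute)
  then have "(\<Sum>i\<in>{1..n}. ?gap i) = 0" unfolding sine_weighted_sum_ball_1 by simp
  moreover have "\<forall>i\<in>{1..n}. 0 \<le> ?gap i"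
    using doubling_bounded_ball_1[OF assms(2)]
    by (auto intro!: mult_nonneg_nonneg sine_measure_nonneg)
  ultimately have "?gap j = 0" using assms(3) sum_nonneg_eq_0_iff[of "{1..n}" ?gap] by simp
  then show ?thesis using sine_measure_pos[OF assms(3)] by simp
qed

lemma perron_root_gt_7_div_3:
  assumes "3 \<le> n"
  shows "7/3 < perron_root n"
proof -
  have "path_angle n \<le> pi / 4"
    unfolding path_angle_def using assms by (intro divide_left_mono) auto
  then have "cos (pi / 4) \<le> cos (path_angle n)"
    using path_angle_pos[of n] by (intro cos_monotone_0_pi_le) auto
  moreover have "4/3 < sqrt 2" by (rule real_less_rsqrt) (simp add: power2_eq_square)
  ultimately show ?thesis unfolding perron_root_def cos_45 by simp
qed

section \<open>A unit ball tight for every minimizer\<close>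

lemma card_ball_L_doubling:
  assumes "x \<in> {1..n}" "2 \<le> n" "\<not> (k = 0 \<and> 2 \<le> x \<and> x \<le> n - 1)"
  shows "3 * card (ball_L n x (2*k+1)) \<le> 7 * card (ball_L n x k)"
  using assms unfolding ball_L_eq_interval card_atLeastAtMost max_def min_def
  by (auto split: if_splits)

lemma slack_at_counting_measure:
  assumes "x \<in> {1..n}" "2 \<le> n" "\<not> (k = 0 \<and> 2 \<le> x \<and> x \<le> n - 1)" "7/3 < c"
  shows "slack_at n c (\<lambda>_. 1) x k"
proof -
  have "ball_L n x k \<noteq> {}" using center_in_ball_L[OF assms(1)] by blast
  then have "0 < real (card (ball_L n x k))" by (simp add: card_gt_0_iff)
  then have "7/3 * real (card (ball_L n x k)) < c * real (card (ball_L n x k))"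
    by (rule mult_strict_right_mono[OF assms(4)])
  moreover have "3 * real (card (ball_L n x (2*k+1))) \<le> 7 * real (card (ball_L n x k))"
    using card_ball_L_doubling[OF assms(1-3)] by linarith
  ultimately show ?thesis unfolding slack_at_def meas_def by simp
qed

lemma slack_cover_by_counting_measure:
  assumes "3 \<le> n" "7/3 < c" "mirror_symmetric n \<sigma>"
    and "\<And>j. 2 \<le> j \<Longrightarrow> 2 * j \<le> n + 1 \<Longrightarrow> slack_at n c \<sigma> j 0" and x: "x \<in> {1..n}"
  shows "slack_at n c \<sigma> x k \<or> slack_at n c (\<lambda>_. 1) x k"
proof (cases "k = 0 \<and> 2 \<le> x \<and> x \<le> n - 1")
  case True
  show ?thesis
  proof (cases "2 * x \<le> n + 1")
    case False
    then have "slack_at n c \<sigma> (n + 1 - x) 0" using True assms(4) by auto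
    then show ?thesis using True slack_at_mirror[OF assms(3) x] by blast
  qed (use True assms(4) in blast)
next
  case False
  then show ?thesis using slack_at_counting_measure[OF x _ False assms(2)] assms(1) by simp
qed

lemma minimizers_attain_some_unit_ball:
  assumes "3 \<le> n"
  shows "\<exists>j. 2 \<le> j \<and> 2 * j \<le> n + 1 \<and> minimizers_attain n j 0"
proof (rule ccontr)
  let ?C = "doubling_const_graph n"
  assume none: "\<not> ?thesis"
  define F where "F = (\<lambda>j. (j, 0::nat)) ` {j. 2 \<le> j \<and> 2 * j \<le> n + 1}"
  have "finite F" unfolding F_def by (rule finite_imageI, rule finite_subset[of _ "{..n}"]) auto
  moreover have "F \<noteq> {}" unfolding F_def using assms by auto
  moreover have "F \<subseteq> {1..n} \<times> UNIV" unfolding F_def by auto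
  moreover have "\<not> minimizers_attain n x k" if "(x, k) \<in> F" for x k
    using that none unfolding F_def by blast
  ultimately obtain \<sigma> where \<sigma>: "doubling_minimizer n \<sigma>" "mirror_symmetric n \<sigma>"
    "\<forall>(x, k)\<in>F. slack_at n ?C \<sigma> x k"
    using exists_mirror_symmetric_minimizer_slack_on[of n F] assms by auto
  have "7/3 < ?C"
    using perron_root_gt_7_div_3[OF assms] perron_root_le_doubling_const_graph[of n] assms by simp
  moreover have "slack_at n ?C \<sigma> j 0" if "2 \<le> j" "2 * j \<le> n + 1" for j
    using \<sigma>(3) that unfolding F_def by blast
  ultimately have cover: "slack_at n ?C \<sigma> x k \<or> slack_at n ?C (\<lambda>_. 1) x k"
    if "x \<in> {1..n}" for x k
    using slack_cover_by_counting_measure[OF assms _ \<sigma>(2) _ that] by blast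
  have "is_measure n (\<lambda>_. 1)" by (simp add: is_measure_def)
  then show False using slack_cover_impossible[OF _ \<sigma>(1) _ cover] assms by simp
qed

section \<open>Doubling of the sine measure\<close>

lemma cos_sub_minus_cos_add: "cos (u - v) - cos (u + v) = 2 * sin u * sin (v::real)"
  by (simp add: cos_add cos_diff)

lemma sin_add_plus_sin_sub: "sin (u + v) + sin (u - v) = 2 * sin u * cos (v::real)"
  by (simp add: sin_add sin_diff)

lemma sin_triple_add_le:
  fixes a h :: real
  assumes h: "0 < h" "h \<le> pi/8" and a: "pi/6 \<le> a" "2*a + h \<le> pi/2"
  shows "sin (3*a + h) \<le> sin (a + 3*h) + sin (a - h)"
proof -
  have cos_2h: "0 \<le> cos (2*h)" by (rule cos_ge_zero) (use h in auto)
  have "sin (2*h) \<le> sin (pi/4)" "cos (pi/4) \<le> cos (2*h)"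
    by (rule sin_monotone_2pi_le, use h in auto) (rule cos_monotone_0_pi_le, use h in auto)
  then have "sin (2*h) \<le> 1 * cos (2*h)" by (simp add: sin_45 cos_45)
  also have "\<dots> \<le> sqrt 3 * cos (2*h)" by (rule mult_right_mono[OF _ cos_2h]) simp
  finally have "0 \<le> sin h * (sqrt 3 * cos (2*h) - sin (2*h))"
    using sin_ge_zero[of h] h by simp
  also have "\<dots> = 2 * sin (pi/6 + h) * cos (2*h) - cos h"
    unfolding cos_double_sin sin_double
    by (simp add: sin_add sin_30 cos_30 algebra_simps power2_eq_square)
  finally have "cos h \<le> 2 * sin (pi/6 + h) * cos (2*h)" by simp
  also have "\<dots> \<le> 2 * sin (a + h) * cos (2*h)"
    using sin_monotone_2pi_le[of "pi/6 + h" "a + h"] h a cos_2h by (simp add: mult_right_mono)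
  also have "\<dots> = sin (a + 3*h) + sin (a - h)"
    using sin_add_plus_sin_sub[of "a + h" "2*h"] by (simp add: add.commute)
  finally have "cos h \<le> sin (a + 3*h) + sin (a - h)" .
  moreover have "sin (3*a + h) \<le> cos h"
  proof -
    have "cos (3*a + h - pi/2) \<le> cos h" by (rule cos_monotone_0_pi_le) (use h a in auto)
    then show ?thesis by (simp add: cos_diff)
  qed
  ultimately show ?thesis by linarith
qed

lemma cos_diff_quadruple_le:
  fixes a h :: real
  assumes "0 < h" "h \<le> pi/8" "pi/6 \<le> a" "2*a + h \<le> pi/2"
  shows "cos h - cos (4*a + h) \<le> (1 + 2 * cos (2*h)) * (cos h - cos (2*a + h))"
proof -
  have "0 \<le> sin a" by (rule sin_ge_zero) (use assms in auto)
  have "cos h - cos (4*a + h) = 2 * sin (2*a + h) * sin (2*a)"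
    using cos_sub_minus_cos_add[of "2*a + h" "2*a"] by simp
  also have "\<dots> = 2 * sin a * (2 * sin (2*a + h) * cos a)" by (simp add: sin_double)
  also have "\<dots> = 2 * sin a * (sin (3*a + h) + sin (a + h))"
    using sin_add_plus_sin_sub[of "2*a + h" a] by simp
  also have "\<dots> \<le> 2 * sin a * (sin (a + 3*h) + sin (a - h) + sin (a + h))"
    using sin_triple_add_le[OF assms] \<open>0 \<le> sin a\<close> by (intro mult_left_mono) auto
  also have "\<dots> = (1 + 2 * cos (2*h)) * (2 * sin (a + h) * sin a)"
    using sin_add_plus_sin_sub[of "a + h" "2*h"] by (simp add: add.commute algebra_simps)
  also have "\<dots> = (1 + 2 * cos (2*h)) * (cos h - cos (2*a + h))"
    using cos_sub_minus_cos_add[of "a + h" a] by simp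
  finally show ?thesis .
qed

lemma sum_sin_even_multiples:
  fixes h :: real
  shows "2 * sin h * (\<Sum>j\<in>{1..b}. sin (real j * (2*h))) = cos h - cos ((2 * real b + 1) * h)"
proof (induction b)
  case (Suc b)
  have "2 * sin (real (Suc b) * (2*h)) * sin h
      = cos ((2 * real b + 1) * h) - cos ((2 * real (Suc b) + 1) * h)"
    using cos_sub_minus_cos_add[of "real (Suc b) * (2*h)" h] by (simp add: algebra_simps)
  with Suc.IH show ?case by (simp add: sum.cl_ivl_Suc algebra_simps)
qed simp

lemma sum_sine_measure_closed:
  "2 * sin (pi / (2 * real (n + 1))) * (\<Sum>j\<in>{1..b}. sine_measure n j)
     = cos (pi / (2 * real (n + 1))) - cos ((2 * real b + 1) * (pi / (2 * real (n + 1))))"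
proof -
  have "path_angle n = 2 * (pi / (2 * real (n + 1)))"
    unfolding path_angle_def by (simp add: field_simps)
  then show ?thesis unfolding sine_measure_def by (simp only: sum_sin_even_multiples)
qed

lemma sum_sine_measure_double_le:
  assumes "3 \<le> n" "n + 1 \<le> 3 * m" "2 * m \<le> n"
  shows "(\<Sum>j\<in>{1..2*m}. sine_measure n j) \<le> perron_root n * (\<Sum>j\<in>{1..m}. sine_measure n j)"
proof -
  define h where "h = pi / (2 * real (n + 1))"
  define a where "a = real m * h"
  have h: "0 < h" "h \<le> pi/8"
    unfolding h_def using assms(1) by (simp, intro divide_left_mono) auto
  have n_h: "real (n + 1) * h = pi/2" unfolding h_def by (simp add: field_simps)
  have "real (n + 1) * h \<le> (3 * real m) * h" "(2 * real m + 1) * h \<le> real (n + 1) * h"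
    using assms(2,3) h(1) by (intro mult_right_mono; simp)+
  then have a: "pi/6 \<le> a" "2*a + h \<le> pi/2" unfolding a_def n_h by (simp_all add: algebra_simps)
  have "path_angle n = 2 * h" unfolding path_angle_def h_def by (simp add: field_simps)
  then have T: "perron_root n = 1 + 2 * cos (2*h)" unfolding perron_root_def by simp
  have sums: "2 * sin h * (\<Sum>j\<in>{1..2*m}. sine_measure n j) = cos h - cos (4*a + h)"
    "2 * sin h * (\<Sum>j\<in>{1..m}. sine_measure n j) = cos h - cos (2*a + h)"
    using sum_sine_measure_closed[of n "2*m", folded h_def]
      sum_sine_measure_closed[of n m, folded h_def]
    unfolding a_def by (simp_all add: algebra_simps)
  have "2 * sin h * (\<Sum>j\<in>{1..2*m}. sine_measure n j)
      \<le> (1 + 2 * cos (2*h)) * (cos h - cos (2*a + h))"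
    unfolding sums by (rule cos_diff_quadruple_le[OF h a])
  also have "\<dots> = 2 * sin h * (perron_root n * (\<Sum>j\<in>{1..m}. sine_measure n j))"
    unfolding T sums(2)[symmetric] by (simp add: algebra_simps)
  finally have "2 * sin h * (\<Sum>j\<in>{1..2*m}. sine_measure n j)
      \<le> 2 * sin h * (perron_root n * (\<Sum>j\<in>{1..m}. sine_measure n j))" .
  moreover have "0 < sin h" by (rule sin_gt_zero) (use h in auto)
  ultimately show ?thesis by simp
qed

lemma sum_sine_measure_tail:
  assumes "m \<le> n"
  shows "(\<Sum>j\<in>{m+1..n}. sine_measure n j) = (\<Sum>j\<in>{1..n-m}. sine_measure n j)"
  by (rule sum.reindex_bij_witness[where i="\<lambda>j. n + 1 - j" and j="\<lambda>j. n + 1 - j"])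
     (use assms in \<open>auto simp: sine_measure_reflect\<close>)

lemma sum_sine_measure_le_twice:
  assumes "m \<le> n" "n + 1 \<le> 2 * m"
  shows "(\<Sum>j\<in>{1..n}. sine_measure n j) \<le> 2 * (\<Sum>j\<in>{1..m}. sine_measure n j)"
proof -
  have "(\<Sum>j\<in>{1..n}. sine_measure n j)
      = (\<Sum>j\<in>{1..m}. sine_measure n j) + (\<Sum>j\<in>{m+1..n}. sine_measure n j)"
    using assms(1) by (subst sum.union_disjoint[symmetric]) (auto intro: sum.cong)
  also have "(\<Sum>j\<in>{m+1..n}. sine_measure n j) \<le> (\<Sum>j\<in>{1..m}. sine_measure n j)"
    unfolding sum_sine_measure_tail[OF assms(1)]
    by (rule sum_mono2) (use assms in \<open>auto intro!: sine_measure_nonneg\<close>)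
  finally show ?thesis by simp
qed

lemma sine_doubling_left:
  assumes "3 \<le> n" "x \<in> {1..n}" "x \<le> k + 1" "n + 1 \<le> 3 * (x + k)"
  shows "meas (sine_measure n) (ball_L n x (2*k+1))
    \<le> perron_root n * meas (sine_measure n) (ball_L n x k)"
proof -
  let ?s = "sine_measure n" and ?m = "min n (x + k)"
  have T: "2 \<le> perron_root n" using perron_root_gt_7_div_3[OF assms(1)] by simp
  have inner: "ball_L n x k = {1..?m}" unfolding ball_L_eq_interval using assms(3) by auto
  have "ball_L n x (2*k+1) \<subseteq> {1..min n (2 * ?m)}"
    unfolding ball_L_eq_interval using assms(2) by (auto simp: min_def)
  then have "meas ?s (ball_L n x (2*k+1)) \<le> meas ?s {1..min n (2 * ?m)}"
    by (rule meas_mono[OF is_measure_sine_measure]) auto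
  also have "\<dots> \<le> perron_root n * meas ?s {1..?m}"
  proof (cases "2 * ?m \<le> n")
    case True
    then have "?m = x + k" using assms(1) by (auto simp: min_def)
    then show ?thesis
      unfolding meas_def using sum_sine_measure_double_le[OF assms(1,4)] True by simp
  next
    case False
    then have "meas ?s {1..min n (2 * ?m)} \<le> 2 * meas ?s {1..?m}"
      unfolding meas_def using sum_sine_measure_le_twice[of ?m n] by simp
    moreover have "0 \<le> meas ?s {1..?m}" by (rule meas_nonneg[OF is_measure_sine_measure]) auto
    ultimately show ?thesis using mult_right_mono[OF T] by (meson order_trans)
  qed
  finally show ?thesis unfolding inner .
qed

text \<open>The sine measure continued to \<int>. It is odd about 0 and about n + 1, so the mass of a
  ball cut off at an end of the path is that of the full block minus the mirror image of the
  cut-off part.\<close>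

definition sine_int :: "nat \<Rightarrow> int \<Rightarrow> real" where
  "sine_int n j = sin (of_int j * path_angle n)"

definition sine_block :: "nat \<Rightarrow> int \<Rightarrow> nat \<Rightarrow> real" where
  "sine_block n a l = (\<Sum>i<l. sine_int n (a + int i))"

lemma sine_int_of_nat: "sine_int n (int j) = sine_measure n j"
  unfolding sine_int_def sine_measure_def by simp

lemma sine_block_0 [simp]: "sine_block n a 0 = 0"
  unfolding sine_block_def by simp

lemma sine_block_Suc: "sine_block n a (Suc l) = sine_block n a l + sine_int n (a + int l)"
  unfolding sine_block_def by simp

lemma sine_block_add:
  "sine_block n a (l1 + l2) = sine_block n a l1 + sine_block n (a + int l1) l2"
  by (induction l2) (simp_all add: sine_block_Suc algebra_simps)

lemma sine_block_Suc_left: "sine_block n a (Suc l) = sine_int n a + sine_block n (a + 1) l"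
  using sine_block_add[of n a 1 l] unfolding sine_block_def by simp

lemma meas_sine_measure_interval:
  assumes "lo \<le> hi + 1"
  shows "meas (sine_measure n) {lo..hi} = sine_block n (int lo) (hi + 1 - lo)"
proof -
  have "(\<Sum>v\<in>{lo..<lo + l}. sine_measure n v) = sine_block n (int lo) l" for l
    by (induction l) (simp_all add: sine_block_Suc sine_int_of_nat[symmetric])
  moreover have "{lo..hi} = {lo..<lo + (hi + 1 - lo)}" using assms by auto
  ultimately show ?thesis unfolding meas_def by simp
qed

lemma sine_block_neighbours:
  "sine_block n (a - 1) l + sine_block n a l + sine_block n (a + 1) l
     = perron_root n * sine_block n a l"
proof -
  have neighbours:
    "sine_int n (b - 1) + sine_int n b + sine_int n (b + 1) = perron_root n * sine_int n b" for b
  proof -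
    have "of_int (b - 1) * path_angle n = of_int b * path_angle n - path_angle n"
      "of_int (b + 1) * path_angle n = of_int b * path_angle n + path_angle n"
      by (simp_all add: algebra_simps)
    then show ?thesis
      unfolding sine_int_def perron_root_def by (simp add: sin_add sin_diff algebra_simps)
  qed
  have "sine_block n (a - 1) l + sine_block n a l + sine_block n (a + 1) l
      = (\<Sum>i<l. sine_int n (a + int i - 1) + sine_int n (a + int i) + sine_int n (a + int i + 1))"
    unfolding sine_block_def by (simp add: sum.distrib algebra_simps)
  then show ?thesis unfolding sine_block_def sum_distrib_left by (simp only: neighbours)
qed

lemma sum_sine_int_reverse: "(\<Sum>i<l. sine_int n (b - int i)) = sine_block n (b - int l + 1) l"
proof (induction l)
  case (Suc l)
  then show ?case using sine_block_Suc_left[of n "b - int l" l] by (simp add: algebra_simps)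
qed simp

lemma sine_block_left_reflect: "sine_block n (1 - int c) c = - sine_block n 0 c"
  using sum_sine_int_reverse[of n 0 c]
  unfolding sine_block_def sine_int_def by (simp add: sum_negf)

lemma sine_block_right_reflect: "sine_block n (int n + 1) c = - sine_block n 0 c"
proof -
  have "sine_int n (int n + 1 + j) = - sine_int n j" for j
  proof -
    have "of_int (int n + 1 + j) * path_angle n = of_int j * path_angle n + pi"
      using path_angle_mult[of n] by (simp add: algebra_simps)
    then show ?thesis unfolding sine_int_def by simp
  qed
  then show ?thesis unfolding sine_block_def by (simp add: sum_negf)
qed

lemma sine_int_nonneg:
  assumes "0 \<le> j" "j \<le> int n + 1"
  shows "0 \<le> sine_int n j"
proof -
  have "0 \<le> of_int j * path_angle n" using assms path_angle_pos[of n] by simp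
  moreover have "of_int j * path_angle n \<le> real (n+1) * path_angle n"
    using assms path_angle_pos[of n] by (intro mult_right_mono) auto
  ultimately show ?thesis
    unfolding sine_int_def using path_angle_mult[of n] by (intro sin_ge_zero) auto
qed

lemma sine_int_half_angle_bounds:
  assumes "0 \<le> z" "z \<le> 2 * (int n + 1)"
  shows "0 \<le> of_int z * path_angle n / 2" "of_int z * path_angle n / 2 \<le> pi"
proof -
  have "of_int z * path_angle n \<le> of_int (2 * (int n + 1)) * path_angle n"
    using assms path_angle_pos[of n] by (intro mult_right_mono) auto
  also have "\<dots> = 2 * pi" using path_angle_mult[of n] by (simp add: algebra_simps)
  finally show "of_int z * path_angle n / 2 \<le> pi" by simp
  show "0 \<le> of_int z * path_angle n / 2" using assms path_angle_pos[of n] by simp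
qed

lemma sine_int_add_eq:
  "sine_int n a + sine_int n d
     = 2 * sin (of_int (a + d) * path_angle n / 2) * cos (of_int (d - a) * path_angle n / 2)"
proof -
  have "(of_int a * path_angle n - of_int d * path_angle n) / 2
      = - (of_int (d - a) * path_angle n / 2)"
    "(of_int a * path_angle n + of_int d * path_angle n) / 2 = of_int (a + d) * path_angle n / 2"
    by (simp_all add: field_simps)
  then show ?thesis unfolding sine_int_def sin_plus_sin by (simp only: cos_minus)
qed

text \<open>Concavity of sine on [0, \<pi>].\<close>

lemma sine_int_pair_le:
  assumes "a \<le> b" "b \<le> c" "c \<le> d" "a + d = b + c" "0 \<le> b + c" "b + c \<le> 2 * (int n + 1)"
    "d - a \<le> 2 * (int n + 1)"
  shows "sine_int n a + sine_int n d \<le> sine_int n b + sine_int n c"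
proof -
  have "of_int (c - b) * path_angle n \<le> of_int (d - a) * path_angle n"
    using assms(1-3) path_angle_pos[of n] by (intro mult_right_mono) auto
  then have "cos (of_int (d - a) * path_angle n / 2) \<le> cos (of_int (c - b) * path_angle n / 2)"
    using sine_int_half_angle_bounds[of "c - b" n] sine_int_half_angle_bounds[of "d - a" n] assms
    by (intro cos_monotone_0_pi_le) auto
  moreover have "0 \<le> sin (of_int (b + c) * path_angle n / 2)"
    using sine_int_half_angle_bounds[of "b + c" n] assms by (intro sin_ge_zero) auto
  ultimately show ?thesis
    unfolding sine_int_add_eq assms(4) by (intro mult_left_mono) auto
qed

lemma sine_int_mono:
  assumes "0 \<le> i" "i \<le> j" "i + j \<le> int n + 1"
  shows "sine_int n i \<le> sine_int n j"
proof -
  have "sine_int n j - sine_int n i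
      = 2 * sin (of_int (j - i) * path_angle n / 2) * cos (of_int (j + i) * path_angle n / 2)"
    unfolding sine_int_def sin_diff_sin by (simp add: algebra_simps)
  moreover have "0 \<le> sin (of_int (j - i) * path_angle n / 2)"
    using sine_int_half_angle_bounds[of "j - i" n] assms by (intro sin_ge_zero) auto
  moreover have "0 \<le> cos (of_int (j + i) * path_angle n / 2)"
  proof (rule cos_ge_zero)
    have "of_int (j + i) * path_angle n \<le> of_int (int n + 1) * path_angle n"
      using assms path_angle_pos[of n] by (intro mult_right_mono) auto
    then show "of_int (j + i) * path_angle n / 2 \<le> pi / 2"
      using path_angle_mult[of n] by (simp add: algebra_simps)
    have "0 \<le> of_int (j + i) * path_angle n / 2"
      using sine_int_half_angle_bounds(1)[of "j + i" n] assms by simp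
    then show "- (pi / 2) \<le> of_int (j + i) * path_angle n / 2" using pi_gt_zero by linarith
  qed
  ultimately have "0 \<le> sine_int n j - sine_int n i" by simp
  then show ?thesis by simp
qed

lemma sum_lessThan_le_longer:
  fixes f g :: "nat \<Rightarrow> real"
  assumes "c \<le> l" "\<And>i. i < c \<Longrightarrow> g i \<le> f i" "\<And>i. i < l \<Longrightarrow> 0 \<le> f i"
  shows "(\<Sum>i<c. g i) \<le> (\<Sum>i<l. f i)"
proof -
  have "(\<Sum>i<c. g i) \<le> (\<Sum>i<c. f i)" using assms(2) by (intro sum_mono) auto
  also have "\<dots> \<le> (\<Sum>i<l. f i)" using assms(1,3) by (intro sum_mono2) auto
  finally show ?thesis .
qed

lemma sine_block_pairing_le:
  fixes p k :: nat
  assumes "2 \<le> p" "p + 2*k + 1 \<le> n"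
  shows "sine_block n (int p - int k - 1) k + sine_block n (int p + 2 * int k + 2) k
           \<le> sine_block n (int p) k + sine_block n (int p + int k + 1) k"
proof -
  have "sine_block n (int p - int k - 1) k = (\<Sum>i<k. sine_int n (int p - 2 - int i))"
    using sum_sine_int_reverse[of n "int p - 2" k] by (simp add: algebra_simps)
  moreover have "sine_block n (int p + int k + 1) k
      = (\<Sum>i<k. sine_int n (int p + 2 * int k - int i))"
    using sum_sine_int_reverse[of n "int p + 2 * int k" k] by (simp add: algebra_simps)
  moreover have "(\<Sum>i<k. sine_int n (int p - 2 - int i) + sine_int n (int p + 2 * int k + 2 + int i))
      \<le> (\<Sum>i<k. sine_int n (int p + int i) + sine_int n (int p + 2 * int k - int i))"
    using assms by (intro sum_mono sine_int_pair_le) auto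
  ultimately show ?thesis unfolding sine_block_def by (simp add: sum.distrib algebra_simps)
qed

text \<open>Expanding both sides into blocks of length k (using the neighbour identity on the right),
  everything cancels except the two pairs compared by the pairing inequality.\<close>

lemma sine_block_core_le:
  fixes p k :: nat
  assumes "2 \<le> p" "p + 2*k + 1 \<le> n"
  shows "sine_block n (int p - int k - 1) (4*k+3) + sine_block n (int p + int k) k
           + sine_block n (int p + 1) k \<le> perron_root n * sine_block n (int p) (2*k+1)"
proof -
  define P K where "P = int p" and "K = int k"
  have "sine_block n (P - K - 1) (4*k+3)
      = sine_block n (P - K - 1) k + sine_block n (P - 1) (2*k+3) + sine_block n (P + 2*K + 2) k"
    using sine_block_add[of n "P - K - 1" k "(2*k+3) + k"] sine_block_add[of n "P - 1" "2*k+3" k]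
    by (simp add: K_def algebra_simps)
  moreover have "sine_block n (P - 1) (2*k+3)
      = sine_int n (P - 1) + sine_block n P (2*k+1) + sine_int n (P + 2*K + 1)"
    using sine_block_Suc_left[of n "P - 1" "2*k+2"] sine_block_Suc[of n P "2*k+1"]
    by (simp add: K_def algebra_simps numeral_3_eq_3)
  moreover have "sine_block n (P - 1) (2*k+1)
      = sine_int n (P - 1) + sine_block n P k + sine_block n (P + K) k"
    using sine_block_Suc_left[of n "P - 1" "2*k"] sine_block_add[of n P k k, folded mult_2]
    by (simp add: K_def algebra_simps)
  moreover have "sine_block n (P + 1) (2*k+1)
      = sine_block n (P + 1) k + sine_block n (P + K + 1) k + sine_int n (P + 2*K + 1)"
    using sine_block_Suc[of n "P + 1" "2*k"] sine_block_add[of n "P + 1" k k, folded mult_2]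
    by (simp add: K_def algebra_simps)
  moreover have "sine_block n (P - K - 1) k + sine_block n (P + 2*K + 2) k
      \<le> sine_block n P k + sine_block n (P + K + 1) k"
    using sine_block_pairing_le[OF assms] unfolding P_def K_def .
  ultimately show ?thesis
    using sine_block_neighbours[of n P "2*k+1"] unfolding P_def K_def by linarith
qed

text \<open>The outer ball is the block [p - k - 1, p + 3k + 1] cut down to [1, n]; the truncated
  subtractions k + 2 - p and p + 3k + 1 - n are the lengths of the parts cut off on either side.\<close>

lemma meas_sine_measure_outer_ball:
  fixes p k :: nat
  assumes "2 \<le> p" "p + 2*k + 1 \<le> n"
  shows "meas (sine_measure n) (ball_L n (p + k) (2*k+1))
    = sine_block n (int p - int k - 1) (4*k+3) + sine_block n 0 (k + 2 - p)
      + sine_block n 0 (p + 3*k + 1 - n)"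
proof -
  define A cl cr where "A = int p - int k - 1" and "cl = k + 2 - p" and "cr = p + 3*k + 1 - n"
  define mid where "mid = 4*k + 3 - cl - cr"
  define lo hi where "lo = max 1 (p + k - (2*k+1))" and "hi = min n (p + k + (2*k+1))"
  have "int lo = A + int cl" "hi + 1 - lo = mid" "lo \<le> hi + 1"
    unfolding lo_def hi_def A_def cl_def cr_def mid_def using assms by auto
  then have "meas (sine_measure n) (ball_L n (p + k) (2*k+1)) = sine_block n (A + int cl) mid"
    unfolding ball_L_eq_interval lo_def[symmetric] hi_def[symmetric]
    by (simp add: meas_sine_measure_interval)
  moreover have "sine_block n A (4*k+3)
      = sine_block n A cl + sine_block n (A + int cl) mid + sine_block n (A + int cl + int mid) cr"
  proof -
    have "cl + (mid + cr) = 4*k+3" unfolding cl_def cr_def mid_def using assms by auto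
    then show ?thesis
      using sine_block_add[of n A cl "mid + cr"] sine_block_add[of n "A + int cl" mid cr] by simp
  qed
  moreover have "sine_block n A cl = - sine_block n 0 cl"
    using sine_block_left_reflect[of n cl] by (cases "cl = 0") (auto simp: A_def cl_def)
  moreover have "sine_block n (A + int cl + int mid) cr = - sine_block n 0 cr"
  proof (cases "cr = 0")
    case False
    then have "A + int cl + int mid = int n + 1"
      unfolding A_def cl_def cr_def mid_def using assms by auto
    then show ?thesis using sine_block_right_reflect by simp
  qed simp
  ultimately show ?thesis unfolding A_def cl_def cr_def by linarith
qed

lemma sine_doubling_interior:
  fixes p k :: nat
  assumes "2 \<le> p" "p + 2*k + 1 \<le> n"
  shows "meas (sine_measure n) (ball_L n (p + k) (2*k+1))
    \<le> perron_root n * meas (sine_measure n) (ball_L n (p + k) k)"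
proof -
  have "ball_L n (p + k) k = {p..p + 2*k}" unfolding ball_L_eq_interval using assms by auto
  then have inner: "meas (sine_measure n) (ball_L n (p + k) k) = sine_block n (int p) (2*k+1)"
    by (simp add: meas_sine_measure_interval)
  have left: "sine_block n 0 (k + 2 - p) \<le> sine_block n (int p + 1) k"
    unfolding sine_block_def using assms
    by (intro sum_lessThan_le_longer sine_int_mono sine_int_nonneg) auto
  have "sine_block n (int p + int k) k = (\<Sum>i<k. sine_int n (int p + 2 * int k - 1 - int i))"
    using sum_sine_int_reverse[of n "int p + 2 * int k - 1" k] by (simp add: algebra_simps)
  moreover have "sine_block n 0 (p + 3*k + 1 - n)
      \<le> (\<Sum>i<k. sine_int n (int p + 2 * int k - 1 - int i))"
    unfolding sine_block_def using assms
    by (intro sum_lessThan_le_longer sine_int_mono sine_int_nonneg) auto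
  ultimately have right: "sine_block n 0 (p + 3*k + 1 - n) \<le> sine_block n (int p + int k) k"
    by simp
  show ?thesis
    unfolding inner meas_sine_measure_outer_ball[OF assms]
    using sine_block_core_le[OF assms] left right by linarith
qed

lemma sine_doubling_le:
  assumes "3 \<le> n" "x \<in> {1..n}"
    and "\<not> (x \<le> k + 1 \<and> 3 * (x + k) \<le> n)" "\<not> (n + 1 - x \<le> k + 1 \<and> 3 * (n + 1 - x + k) \<le> n)"
  shows "meas (sine_measure n) (ball_L n x (2*k+1))
    \<le> perron_root n * meas (sine_measure n) (ball_L n x k)"
proof -
  consider "x \<le> k + 1" | "k + 1 < x" "x + k < n" | "k + 1 < x" "n \<le> x + k" by linarith
  then show ?thesis
  proof cases
    case 1
    then show ?thesis using sine_doubling_left[OF assms(1,2)] assms(3) by simp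
  next
    case 2
    then show ?thesis using sine_doubling_interior[of "x - k" k n] by simp
  next
    case 3
    let ?y = "n + 1 - x"
    have y: "?y \<in> {1..n}" "?y \<le> k + 1" using assms(2) 3 by auto
    then show ?thesis
      using sine_doubling_left[OF assms(1) y] assms(4)
        meas_ball_L_mirror[OF mirror_symmetric_sine_measure assms(2)] by simp
  qed
qed

section \<open>A ball at the end of the path tight for every minimizer\<close>

lemma slack_at_left_ball:
  assumes "is_measure n \<mu>" "x \<in> {1..n}" "x \<le> k + 1" "slack_at n c \<mu> 1 (x + k - 1)"
  shows "slack_at n c \<mu> x k"
proof -
  have inner: "ball_L n x k = ball_L n 1 (x + k - 1)"
    unfolding ball_L_eq_interval using assms(2,3) by auto
  have "ball_L n x (2*k+1) \<subseteq> ball_L n 1 (2 * (x + k - 1) + 1)"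
    unfolding ball_L_eq_interval using assms(2) by auto
  then have "meas \<mu> (ball_L n x (2*k+1)) \<le> meas \<mu> (ball_L n 1 (2 * (x + k - 1) + 1))"
    by (rule meas_mono[OF assms(1) _ ball_L_subset])
  then show ?thesis using assms(4) unfolding slack_at_def inner by linarith
qed

lemma minimizers_attain_unit_ball_if_perron:
  assumes "doubling_const_graph n = perron_root n" "x \<in> {1..n}"
  shows "minimizers_attain n x 0"
  unfolding minimizers_attain_def
proof (intro allI impI)
  fix \<mu> assume "doubling_minimizer n \<mu>"
  then have "is_measure n \<mu>" "doubling_bounded n (perron_root n) \<mu>"
    using doubling_minimizer_iff[of n \<mu>] assms by auto
  then show "meas \<mu> (ball_L n x (2*0+1)) = doubling_const_graph n * meas \<mu> (ball_L n x 0)"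
    using perron_bounded_attains_ball_1[of n \<mu> x] meas_ball_L_0[of x n \<mu>] assms by simp
qed

lemma slack_cover_by_sine_measure:
  assumes "3 \<le> n" "perron_root n < c" "is_measure n \<sigma>" "mirror_symmetric n \<sigma>"
    and left: "\<And>k. 3 * k + 3 \<le> n \<Longrightarrow> slack_at n c \<sigma> 1 k" and x: "x \<in> {1..n}"
  shows "slack_at n c \<sigma> x k \<or> slack_at n c (sine_measure n) x k"
proof -
  have short: "slack_at n c \<sigma> y k" if "y \<in> {1..n}" "y \<le> k + 1" "3 * (y + k) \<le> n" for y
    using slack_at_left_ball[OF assms(3) that(1,2)] left that by simp
  consider "x \<le> k + 1 \<and> 3 * (x + k) \<le> n" | "n + 1 - x \<le> k + 1 \<and> 3 * (n + 1 - x + k) \<le> n"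
    | "\<not> (x \<le> k + 1 \<and> 3 * (x + k) \<le> n)" "\<not> (n + 1 - x \<le> k + 1 \<and> 3 * (n + 1 - x + k) \<le> n)"
    by blast
  then show ?thesis
  proof cases
    case 1
    then show ?thesis using short x by blast
  next
    case 2
    then have "slack_at n c \<sigma> (n + 1 - x) k" using short x by auto
    then show ?thesis using slack_at_mirror[OF assms(4) x] by blast
  next
    case 3
    have "0 < meas (sine_measure n) (ball_L n x k)"
      by (rule meas_ball_L_pos[OF is_measure_sine_measure x])
    then show ?thesis
      using sine_doubling_le[OF assms(1) x 3] assms(2) unfolding slack_at_def
      by (smt (verit) mult_strict_right_mono)
  qed
qed

lemma minimizers_attain_some_left_ball:
  assumes "3 \<le> n"
  shows "\<exists>k. 3 * k + 3 \<le> n \<and> minimizers_attain n 1 k"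
proof (cases "doubling_const_graph n = perron_root n")
  case True
  then show ?thesis
    using minimizers_attain_unit_ball_if_perron[of n 1] assms by (intro exI[where x=0]) simp
next
  case False
  let ?C = "doubling_const_graph n"
  show ?thesis
  proof (rule ccontr)
    assume none: "\<not> ?thesis"
    define F where "F = (\<lambda>k. (1::nat, k)) ` {k. 3 * k + 3 \<le> n}"
    have "finite F" unfolding F_def by (rule finite_imageI, rule finite_subset[of _ "{..n}"]) auto
    moreover have "(1, 0) \<in> F" unfolding F_def using assms by auto
    then have "F \<noteq> {}" by blast
    moreover have "F \<subseteq> {1..n} \<times> UNIV" unfolding F_def using assms by auto
    moreover have "\<not> minimizers_attain n x k" if "(x, k) \<in> F" for x k
      using that none unfolding F_def by blast
    ultimately obtain \<sigma> where \<sigma>: "doubling_minimizer n \<sigma>" "mirror_symmetric n \<sigma>"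
      "\<forall>(x, k)\<in>F. slack_at n ?C \<sigma> x k"
      using exists_mirror_symmetric_minimizer_slack_on[of n F] assms by auto
    have "perron_root n < ?C"
      using False perron_root_le_doubling_const_graph[of n] assms by simp
    moreover have "is_measure n \<sigma>" using \<sigma>(1) unfolding doubling_minimizer_def by blast
    moreover have "slack_at n ?C \<sigma> 1 k" if "3 * k + 3 \<le> n" for k
      using \<sigma>(3) that unfolding F_def by blast
    ultimately have cover: "slack_at n ?C \<sigma> x k \<or> slack_at n ?C (sine_measure n) x k"
      if "x \<in> {1..n}" for x k
      using slack_cover_by_sine_measure[OF assms _ _ \<sigma>(2) _ that] by blast
    show False
      using slack_cover_impossible[OF _ \<sigma>(1) is_measure_sine_measure cover] assms by simp
  qed
qed

theorem theorem6p6: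
  fixes n :: nat
  assumes "n \<ge> 3"
  shows "\<exists>j k :: nat.
           2 \<le> j \<and> int j \<le> \<lceil>real n / 2\<rceil> \<and>
           int k < \<lceil>(real n - 2) / 3\<rceil> \<and>
           (\<forall>\<mu>. doubling_minimizer n \<mu> \<longrightarrow>
              meas \<mu> (ball_L n j 1) / meas \<mu> (ball_L n j 0) =
                meas \<mu> (ball_L n 1 (2*k+1)) / meas \<mu> (ball_L n 1 k) \<and>
              meas \<mu> (ball_L n 1 (2*k+1)) / meas \<mu> (ball_L n 1 k) = doubling_const n \<mu>)"
proof -
  obtain j where j: "2 \<le> j" "2 * j \<le> n + 1" "minimizers_attain n j 0"
    using minimizers_attain_some_unit_ball[OF assms] by blast
  obtain k where k: "3 * k + 3 \<le> n" "minimizers_attain n 1 k"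
    using minimizers_attain_some_left_ball[OF assms] by blast
  have "int j \<le> \<lceil>real n / 2\<rceil>" "int k < \<lceil>(real n - 2) / 3\<rceil>"
    using j(2) k(1) by (simp_all add: le_ceiling_iff less_ceiling_iff)
  moreover have "meas \<mu> (ball_L n j 1) / meas \<mu> (ball_L n j 0) = doubling_const n \<mu>"
    "meas \<mu> (ball_L n 1 (2*k+1)) / meas \<mu> (ball_L n 1 k) = doubling_const n \<mu>"
    if "doubling_minimizer n \<mu>" for \<mu>
    using minimizers_attain_imp_ratio_eq[OF j(3) that] minimizers_attain_imp_ratio_eq[OF k(2) that]
      j assms by auto
  ultimately show ?thesis using j(1) by metis
qed

end
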